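(* Let $\mathcal{O}=(\{\mathcal{O}(n)\}_{n\ge1},\circ_i,\mathds{1})$ be a nonsymmetric operad of $\mathbf{k}$-modules. For $n\ge1$ put $\mathcal{O}^{\mathrm{comp}}(n):=\mathcal{O}(n)^{\oplus n}$ ($n$ copies), and for $f=(f_1,\dots,f_m)\in\mathcal{O}^{\mathrm{comp}}(m)$, $g=(g_1,\dots,g_n)\in\mathcal{O}^{\mathrm{comp}}(n)$ and $1\le i\le m$ define $f\circ_i^{\mathrm{comp}}g\in\mathcal{O}^{\mathrm{comp}}(m+n-1)$ to be the tuple whose $k$-th component ($1\le k\le m+n-1$) is $\sum_{r+s=k+1,\,1\le r\le m,\,1\le s\le n} f_r\circ_i g_s$. Then $\mathcal{O}^{\mathrm{comp}}=(\{\mathcal{O}^{\mathrm{comp}}(n)\}_{n\ge1},\circ_i^{\mathrm{comp}},\mathds{1})$ (with $\mathds{1}\in\mathcal{O}(1)=\mathcal{O}^{\mathrm{comp}}(1)$) is a nonsymmetric operad. Moreover, an element $\pi=(\pi_1,\pi_2)\in\mathcal{O}^{\mathrm{comp}}(2)$ is a multiplication on $\mathcal{O}^{\mathrm{comp}}$ if and only if $(\pi_1,\pi_2)$ is a compatible multiplication on $\mathcal{O}$.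
   Context: $\mathbf{k}$ is a commutative unital ring of characteristic $0$. A nonsymmetric operad consists of $\mathbf{k}$-modules $\mathcal{O}(n)$, $n\ge1$, bilinear partial compositions $\circ_i:\mathcal{O}(m)\otimes\mathcal{O}(n)\to\mathcal{O}(m+n-1)$ ($1\le i\le m$) and $\mathds{1}\in\mathcal{O}(1)$ such that $(f\circ_i g)\circ_{i+j-1}h=f\circ_i(g\circ_j h)$ for $1\le i\le m$, $1\le j\le n$; $(f\circ_i g)\circ_{j+n-1}h=(f\circ_j h)\circ_i g$ for $1\le i<j\le m$; and $f\circ_i\mathds{1}=\mathds{1}\circ_1 f=f$. A multiplication on an operad $\mathcal{P}$ is $\pi\in\mathcal{P}(2)$ with $\pi\circ_1\pi=\pi\circ_2\pi$. A compatible multiplication on $\mathcal{O}$ is a pair $(\pi_1,\pi_2)$ of multiplications on $\mathcal{O}$ satisfying $\pi_1\circ_1\pi_2+\pi_2\circ_1\pi_1=\pi_1\circ_2\pi_2+\pi_2\circ_2\pi_1$. *)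

theory Defs
  imports Complex_Main "HOL-Library.Function_Algebras"
begin

text \<open>All arities live in one ambient k-module
  (type 'b with scalar multiplication scale over the ring 'a); O(n) is the
  submodule C n. cmp m n i f g is the partial composition f o_i g of f in O(m),
  g in O(n). Axioms are only imposed on the carriers (arities n >= 1).\<close>

definition ns_operad ::
  "('a::comm_ring_1 \<Rightarrow> 'b::ab_group_add \<Rightarrow> 'b) \<Rightarrow> (nat \<Rightarrow> 'b set)
     \<Rightarrow> (nat \<Rightarrow> nat \<Rightarrow> nat \<Rightarrow> 'b \<Rightarrow> 'b \<Rightarrow> 'b) \<Rightarrow> 'b \<Rightarrow> bool" where
  "ns_operad scale C cmp u \<longleftrightarrow>
     module scale \<and>
     (\<forall>n\<ge>1. 0 \<in> C n \<and> (\<forall>x\<in>C n. \<forall>y\<in>C n. x + y \<in> C n) \<and> (\<forall>c. \<forall>x\<in>C n. scale c x \<in> C n)) \<and>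
     u \<in> C 1 \<and>
     (\<forall>m n i f g. 1 \<le> m \<and> 1 \<le> n \<and> 1 \<le> i \<and> i \<le> m \<and> f \<in> C m \<and> g \<in> C n \<longrightarrow>
        cmp m n i f g \<in> C (m + n - 1)) \<and>
     (\<forall>m n i f f' g. 1 \<le> m \<and> 1 \<le> n \<and> 1 \<le> i \<and> i \<le> m \<and> f \<in> C m \<and> f' \<in> C m \<and> g \<in> C n \<longrightarrow>
        cmp m n i (f + f') g = cmp m n i f g + cmp m n i f' g) \<and>
     (\<forall>m n i f g g'. 1 \<le> m \<and> 1 \<le> n \<and> 1 \<le> i \<and> i \<le> m \<and> f \<in> C m \<and> g \<in> C n \<and> g' \<in> C n \<longrightarrow>
        cmp m n i f (g + g') = cmp m n i f g + cmp m n i f g') \<and>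
     (\<forall>m n i c f g. 1 \<le> m \<and> 1 \<le> n \<and> 1 \<le> i \<and> i \<le> m \<and> f \<in> C m \<and> g \<in> C n \<longrightarrow>
        cmp m n i (scale c f) g = scale c (cmp m n i f g) \<and>
        cmp m n i f (scale c g) = scale c (cmp m n i f g)) \<and>
     (\<forall>m n p i j f g h. 1 \<le> m \<and> 1 \<le> n \<and> 1 \<le> p \<and> 1 \<le> i \<and> i \<le> m \<and> 1 \<le> j \<and> j \<le> n \<and>
        f \<in> C m \<and> g \<in> C n \<and> h \<in> C p \<longrightarrow>
        cmp (m + n - 1) p (i + j - 1) (cmp m n i f g) h = cmp m (n + p - 1) i f (cmp n p j g h)) \<and>
     (\<forall>m n p i j f g h. 1 \<le> m \<and> 1 \<le> n \<and> 1 \<le> p \<and> 1 \<le> i \<and> i < j \<and> j \<le> m \<and>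
        f \<in> C m \<and> g \<in> C n \<and> h \<in> C p \<longrightarrow>
        cmp (m + n - 1) p (j + n - 1) (cmp m n i f g) h = cmp (m + p - 1) n i (cmp m p j f h) g) \<and>
     (\<forall>m i f. 1 \<le> m \<and> 1 \<le> i \<and> i \<le> m \<and> f \<in> C m \<longrightarrow> cmp m 1 i f u = f) \<and>
     (\<forall>m f. 1 \<le> m \<and> f \<in> C m \<longrightarrow> cmp 1 m 1 u f = f)"

definition is_multiplication :: "(nat \<Rightarrow> 'b set) \<Rightarrow> (nat \<Rightarrow> nat \<Rightarrow> nat \<Rightarrow> 'b \<Rightarrow> 'b \<Rightarrow> 'b) \<Rightarrow> 'b \<Rightarrow> bool" where
  "is_multiplication C cmp p \<longleftrightarrow> p \<in> C 2 \<and> cmp 2 2 1 p p = cmp 2 2 2 p p"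

definition compatible_multiplication ::
  "(nat \<Rightarrow> 'b::ab_group_add set) \<Rightarrow> (nat \<Rightarrow> nat \<Rightarrow> nat \<Rightarrow> 'b \<Rightarrow> 'b \<Rightarrow> 'b) \<Rightarrow> 'b \<Rightarrow> 'b \<Rightarrow> bool" where
  "compatible_multiplication C cmp p1 p2 \<longleftrightarrow>
     is_multiplication C cmp p1 \<and> is_multiplication C cmp p2 \<and>
     cmp 2 2 1 p1 p2 + cmp 2 2 1 p2 p1 = cmp 2 2 2 p1 p2 + cmp 2 2 2 p2 p1"

text \<open>The operad O^comp. An element of O^comp(n) = O(n)^{(+)n} is a function F :: nat => 'b
  with F k the k-th component (1 <= k <= n), and F k = 0 outside {1..n}.\<close>
definition comp_scale :: "('a \<Rightarrow> 'b \<Rightarrow> 'b) \<Rightarrow> 'a \<Rightarrow> (nat \<Rightarrow> 'b) \<Rightarrow> (nat \<Rightarrow> 'b)" where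
  "comp_scale scale c F = (\<lambda>k. scale c (F k))"

definition comp_carrier :: "(nat \<Rightarrow> 'b::zero set) \<Rightarrow> nat \<Rightarrow> (nat \<Rightarrow> 'b) set" where
  "comp_carrier C n = {F. (\<forall>k\<in>{1..n}. F k \<in> C n) \<and> (\<forall>k. k \<notin> {1..n} \<longrightarrow> F k = 0)}"

definition comp_comp ::
  "(nat \<Rightarrow> nat \<Rightarrow> nat \<Rightarrow> 'b::comm_monoid_add \<Rightarrow> 'b \<Rightarrow> 'b)
     \<Rightarrow> nat \<Rightarrow> nat \<Rightarrow> nat \<Rightarrow> (nat \<Rightarrow> 'b) \<Rightarrow> (nat \<Rightarrow> 'b) \<Rightarrow> (nat \<Rightarrow> 'b)" where
  "comp_comp cmp m n i F G =
     (\<lambda>k. if 1 \<le> k \<and> k \<le> m + n - 1 then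
            (\<Sum>(r, s) \<in> {(r, s). r \<in> {1..m} \<and> s \<in> {1..n} \<and> r + s = k + 1}. cmp m n i (F r) (G s))
          else 0)"

definition comp_unit :: "'b::zero \<Rightarrow> (nat \<Rightarrow> 'b)" where
  "comp_unit u = (\<lambda>k. if k = 1 then u else 0)"

end

theory Submission
  imports Defs
begin

(* The k-th component of a twofold composite (F o_i G) o_I H in O^comp, and likewise of
   F o_i (G o_j H), is the sum over r + s + t = k + 2 of the corresponding twofold composites
   of the components, by bilinearity of the compositions of O. Hence associativity and the
   parallel axiom hold in O^comp term by term, as they hold in O; the unit is (u, 0, ...).
   For pi = (pi_1, pi_2) the components of degree 1, 2, 3 of pi o_1 pi - pi o_2 pi are
   pi_1 o_1 pi_1 - pi_1 o_2 pi_1, the mixed terms of the compatibility condition, and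
   pi_2 o_1 pi_2 - pi_2 o_2 pi_2. *)

lemma comp_comp_component:
  "comp_comp cmp m n i F G k = (\<Sum>r=1..m. \<Sum>s=1..n. if r + s = k + 1 then cmp m n i (F r) (G s) else 0)"
proof (cases "1 \<le> k \<and> k \<le> m + n - 1")
  case True
  have "{(r, s). r \<in> {1..m} \<and> s \<in> {1..n} \<and> r + s = k + 1} = {x \<in> {1..m} \<times> {1..n}. fst x + snd x = k + 1}"
    by auto
  with True show ?thesis
    by (simp add: comp_comp_def sum.inter_filter sum.cartesian_product case_prod_beta)
next
  case False
  then show ?thesis by (auto simp: comp_comp_def intro!: sum.neutral)
qed

lemma sum_shifted_delta:
  fixes y :: "'b::comm_monoid_add" and r s t k :: nat
  assumes "r \<in> {1..m}" "s \<in> {1..n}"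
  shows "(\<Sum>a=1..m+n-1. if a + t = k + 1 \<and> r + s = a + 1 then y else 0) = (if r + s + t = k + 2 then y else 0)"
proof -
  have "(\<Sum>a=1..m+n-1. if a + t = k + 1 \<and> r + s = a + 1 then y else 0)
      = (\<Sum>a=1..m+n-1. if a = r + s - 1 then (if r + s + t = k + 2 then y else 0) else 0)"
    using assms by (intro sum.cong) auto
  moreover have "r + s - 1 \<in> {1..m+n-1}"
    using assms by auto
  ultimately show ?thesis
    by simp
qed

lemma sum_convolution_nested:
  fixes Y :: "nat \<Rightarrow> nat \<Rightarrow> nat \<Rightarrow> 'b::comm_monoid_add" and k :: nat
  shows "(\<Sum>a=1..m+n-1. \<Sum>t=1..p. if a + t = k + 1 then (\<Sum>r=1..m. \<Sum>s=1..n. if r + s = a + 1 then Y r s t else 0) else 0)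
       = (\<Sum>r=1..m. \<Sum>s=1..n. \<Sum>t=1..p. if r + s + t = k + 2 then Y r s t else 0)"
proof -
  have "(\<Sum>a=1..m+n-1. \<Sum>t=1..p. if a + t = k + 1 then (\<Sum>r=1..m. \<Sum>s=1..n. if r + s = a + 1 then Y r s t else 0) else 0)
      = (\<Sum>a=1..m+n-1. \<Sum>t=1..p. \<Sum>r=1..m. \<Sum>s=1..n. if a + t = k + 1 \<and> r + s = a + 1 then Y r s t else 0)"
    by (auto intro!: sum.cong sum.neutral)
  also have "\<dots> = (\<Sum>r=1..m. \<Sum>s=1..n. \<Sum>t=1..p. \<Sum>a=1..m+n-1. if a + t = k + 1 \<and> r + s = a + 1 then Y r s t else 0)"
    by (subst sum.swap, subst (2) sum.swap, subst (2) sum.swap, simp only: sum.swap[of _ "{1..p}"])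
  also have "\<dots> = (\<Sum>r=1..m. \<Sum>s=1..n. \<Sum>t=1..p. if r + s + t = k + 2 then Y r s t else 0)"
    by (intro sum.cong refl sum_shifted_delta)
  finally show ?thesis .
qed

lemma sum_convolution_nested_right:
  fixes Y :: "nat \<Rightarrow> nat \<Rightarrow> nat \<Rightarrow> 'b::comm_monoid_add" and k :: nat
  shows "(\<Sum>r=1..m. \<Sum>b=1..n+p-1. if r + b = k + 1 then (\<Sum>s=1..n. \<Sum>t=1..p. if s + t = b + 1 then Y r s t else 0) else 0)
       = (\<Sum>r=1..m. \<Sum>s=1..n. \<Sum>t=1..p. if r + s + t = k + 2 then Y r s t else 0)"
proof -
  have "(\<Sum>r=1..m. \<Sum>b=1..n+p-1. if r + b = k + 1 then (\<Sum>s=1..n. \<Sum>t=1..p. if s + t = b + 1 then Y r s t else 0) else 0)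
      = (\<Sum>b=1..n+p-1. \<Sum>r=1..m. if b + r = k + 1 then (\<Sum>s=1..n. \<Sum>t=1..p. if s + t = b + 1 then Y r s t else 0) else 0)"
    by (subst sum.swap) (simp add: add.commute)
  also have "\<dots> = (\<Sum>s=1..n. \<Sum>t=1..p. \<Sum>r=1..m. if s + t + r = k + 2 then Y r s t else 0)"
    by (rule sum_convolution_nested)
  also have "\<dots> = (\<Sum>r=1..m. \<Sum>s=1..n. \<Sum>t=1..p. if r + s + t = k + 2 then Y r s t else 0)"
    by (subst sum.swap, subst (2) sum.swap) (simp add: ac_simps)
  finally show ?thesis .
qed

lemma comp_carrier_component: "F \<in> comp_carrier C n \<Longrightarrow> k \<in> {1..n} \<Longrightarrow> F k \<in> C n"
  unfolding comp_carrier_def by blast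

lemma comp_carrier_component_zero: "F \<in> comp_carrier C n \<Longrightarrow> k \<notin> {1..n} \<Longrightarrow> F k = 0"
  unfolding comp_carrier_def by blast

context
  fixes scale :: "'a::comm_ring_1 \<Rightarrow> 'b::ab_group_add \<Rightarrow> 'b"
    and C :: "nat \<Rightarrow> 'b set"
    and cmp :: "nat \<Rightarrow> nat \<Rightarrow> nat \<Rightarrow> 'b \<Rightarrow> 'b \<Rightarrow> 'b"
    and u :: 'b
  assumes operad: "ns_operad scale C cmp u"
begin

lemma module_scale: "module scale"
  using operad by (simp add: ns_operad_def)

lemma zero_mem: "1 \<le> n \<Longrightarrow> 0 \<in> C n"
  using operad by (simp add: ns_operad_def)

lemma add_mem: "1 \<le> n \<Longrightarrow> x \<in> C n \<Longrightarrow> y \<in> C n \<Longrightarrow> x + y \<in> C n"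
  using operad by (simp add: ns_operad_def)

lemma scale_mem: "1 \<le> n \<Longrightarrow> x \<in> C n \<Longrightarrow> scale c x \<in> C n"
  using operad by (simp add: ns_operad_def)

lemma unit_mem: "u \<in> C 1"
  using operad by (simp add: ns_operad_def)

lemma cmp_mem:
  "\<lbrakk>1 \<le> m; 1 \<le> n; 1 \<le> i; i \<le> m; f \<in> C m; g \<in> C n\<rbrakk> \<Longrightarrow> cmp m n i f g \<in> C (m + n - 1)"
  using operad by (simp add: ns_operad_def)

lemma cmp_add_left:
  "\<lbrakk>1 \<le> m; 1 \<le> n; 1 \<le> i; i \<le> m; f \<in> C m; f' \<in> C m; g \<in> C n\<rbrakk>
    \<Longrightarrow> cmp m n i (f + f') g = cmp m n i f g + cmp m n i f' g"
  using operad by (simp add: ns_operad_def)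

lemma cmp_add_right:
  "\<lbrakk>1 \<le> m; 1 \<le> n; 1 \<le> i; i \<le> m; f \<in> C m; g \<in> C n; g' \<in> C n\<rbrakk>
    \<Longrightarrow> cmp m n i f (g + g') = cmp m n i f g + cmp m n i f g'"
  using operad by (simp add: ns_operad_def)

lemma cmp_scale_left:
  "\<lbrakk>1 \<le> m; 1 \<le> n; 1 \<le> i; i \<le> m; f \<in> C m; g \<in> C n\<rbrakk>
    \<Longrightarrow> cmp m n i (scale c f) g = scale c (cmp m n i f g)"
  using operad by (simp add: ns_operad_def)

lemma cmp_scale_right:
  "\<lbrakk>1 \<le> m; 1 \<le> n; 1 \<le> i; i \<le> m; f \<in> C m; g \<in> C n\<rbrakk>
    \<Longrightarrow> cmp m n i f (scale c g) = scale c (cmp m n i f g)"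
  using operad by (simp add: ns_operad_def)

lemma cmp_assoc:
  "\<lbrakk>1 \<le> m; 1 \<le> n; 1 \<le> p; 1 \<le> i; i \<le> m; 1 \<le> j; j \<le> n; f \<in> C m; g \<in> C n; h \<in> C p\<rbrakk>
    \<Longrightarrow> cmp (m + n - 1) p (i + j - 1) (cmp m n i f g) h = cmp m (n + p - 1) i f (cmp n p j g h)"
  using operad by (simp add: ns_operad_def)

lemma cmp_commute:
  "\<lbrakk>1 \<le> m; 1 \<le> n; 1 \<le> p; 1 \<le> i; i < j; j \<le> m; f \<in> C m; g \<in> C n; h \<in> C p\<rbrakk>
    \<Longrightarrow> cmp (m + n - 1) p (j + n - 1) (cmp m n i f g) h = cmp (m + p - 1) n i (cmp m p j f h) g"
  using operad by (simp add: ns_operad_def)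

lemma cmp_unit_right: "\<lbrakk>1 \<le> m; 1 \<le> i; i \<le> m; f \<in> C m\<rbrakk> \<Longrightarrow> cmp m 1 i f u = f"
  using operad by (simp add: ns_operad_def)

lemma cmp_unit_left: "\<lbrakk>1 \<le> m; f \<in> C m\<rbrakk> \<Longrightarrow> cmp 1 m 1 u f = f"
  using operad by (simp add: ns_operad_def)

lemma sum_mem: "1 \<le> n \<Longrightarrow> (\<And>x. x \<in> A \<Longrightarrow> g x \<in> C n) \<Longrightarrow> sum g A \<in> C n"
  by (induction A rule: infinite_finite_induct) (simp_all add: zero_mem add_mem)

lemma if_zero_mem: "1 \<le> n \<Longrightarrow> (c \<Longrightarrow> x \<in> C n) \<Longrightarrow> (if c then x else 0) \<in> C n"
  by (simp add: zero_mem)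

lemma cmp_zero_left: "\<lbrakk>1 \<le> m; 1 \<le> n; 1 \<le> i; i \<le> m; g \<in> C n\<rbrakk> \<Longrightarrow> cmp m n i 0 g = 0"
  using cmp_add_left[of m n i 0 0 g] by (simp add: zero_mem)

lemma cmp_zero_right: "\<lbrakk>1 \<le> m; 1 \<le> n; 1 \<le> i; i \<le> m; f \<in> C m\<rbrakk> \<Longrightarrow> cmp m n i f 0 = 0"
  using cmp_add_right[of m n i f 0 0] by (simp add: zero_mem)

lemma cmp_if_zero_left:
  "\<lbrakk>1 \<le> m; 1 \<le> n; 1 \<le> i; i \<le> m; g \<in> C n\<rbrakk>
    \<Longrightarrow> cmp m n i (if c then f else 0) g = (if c then cmp m n i f g else 0)"
  by (simp add: cmp_zero_left)

lemma cmp_if_zero_right: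
  "\<lbrakk>1 \<le> m; 1 \<le> n; 1 \<le> i; i \<le> m; f \<in> C m\<rbrakk>
    \<Longrightarrow> cmp m n i f (if c then g else 0) = (if c then cmp m n i f g else 0)"
  by (simp add: cmp_zero_right)

lemma cmp_sum_left:
  "\<lbrakk>1 \<le> m; 1 \<le> n; 1 \<le> i; i \<le> m; g \<in> C n; \<And>x. x \<in> A \<Longrightarrow> f x \<in> C m\<rbrakk>
    \<Longrightarrow> cmp m n i (sum f A) g = (\<Sum>x\<in>A. cmp m n i (f x) g)"
  by (induction A rule: infinite_finite_induct) (simp_all add: cmp_zero_left cmp_add_left sum_mem)

lemma cmp_sum_right:
  "\<lbrakk>1 \<le> m; 1 \<le> n; 1 \<le> i; i \<le> m; f \<in> C m; \<And>x. x \<in> A \<Longrightarrow> g x \<in> C n\<rbrakk>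
    \<Longrightarrow> cmp m n i f (sum g A) = (\<Sum>x\<in>A. cmp m n i f (g x))"
  by (induction A rule: infinite_finite_induct) (simp_all add: cmp_zero_right cmp_add_right sum_mem)

lemma cmp_components_mem:
  "\<lbrakk>1 \<le> m; 1 \<le> n; 1 \<le> i; i \<le> m; F \<in> comp_carrier C m; G \<in> comp_carrier C n; r \<in> {1..m}; s \<in> {1..n}\<rbrakk>
    \<Longrightarrow> cmp m n i (F r) (G s) \<in> C (m + n - 1)"
  by (intro cmp_mem) (auto intro: comp_carrier_component)

lemma cmp_comp_comp_component_left:
  assumes "1 \<le> m" "1 \<le> n" "1 \<le> p" "1 \<le> i" "i \<le> m" "1 \<le> I" "I \<le> m + n - 1"
    and F: "F \<in> comp_carrier C m" and G: "G \<in> comp_carrier C n" and "h \<in> C p"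
  shows "cmp (m + n - 1) p I (comp_comp cmp m n i F G a) h =
    (\<Sum>r=1..m. \<Sum>s=1..n. if r + s = a + 1 then cmp (m + n - 1) p I (cmp m n i (F r) (G s)) h else 0)"
proof -
  note mem = cmp_components_mem[OF _ _ _ _ F G]
  have "cmp (m + n - 1) p I (comp_comp cmp m n i F G a) h =
      (\<Sum>r=1..m. cmp (m + n - 1) p I (\<Sum>s=1..n. if r + s = a + 1 then cmp m n i (F r) (G s) else 0) h)"
    unfolding comp_comp_component using assms mem by (intro cmp_sum_left sum_mem if_zero_mem) auto
  also have "\<dots> = (\<Sum>r=1..m. \<Sum>s=1..n. cmp (m + n - 1) p I (if r + s = a + 1 then cmp m n i (F r) (G s) else 0) h)"
    using assms mem by (intro sum.cong refl cmp_sum_left if_zero_mem) auto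
  also have "\<dots> = (\<Sum>r=1..m. \<Sum>s=1..n. if r + s = a + 1 then cmp (m + n - 1) p I (cmp m n i (F r) (G s)) h else 0)"
    using assms by (intro sum.cong refl cmp_if_zero_left) auto
  finally show ?thesis .
qed

lemma cmp_comp_comp_component_right:
  assumes "1 \<le> m" "1 \<le> n" "1 \<le> p" "1 \<le> i" "i \<le> m" "1 \<le> j" "j \<le> n"
    and "f \<in> C m" and G: "G \<in> comp_carrier C n" and H: "H \<in> comp_carrier C p"
  shows "cmp m (n + p - 1) i f (comp_comp cmp n p j G H b) =
    (\<Sum>s=1..n. \<Sum>t=1..p. if s + t = b + 1 then cmp m (n + p - 1) i f (cmp n p j (G s) (H t)) else 0)"
proof -
  note mem = cmp_components_mem[OF _ _ _ _ G H]
  have "cmp m (n + p - 1) i f (comp_comp cmp n p j G H b) =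
      (\<Sum>s=1..n. cmp m (n + p - 1) i f (\<Sum>t=1..p. if s + t = b + 1 then cmp n p j (G s) (H t) else 0))"
    unfolding comp_comp_component using assms mem by (intro cmp_sum_right sum_mem if_zero_mem) auto
  also have "\<dots> = (\<Sum>s=1..n. \<Sum>t=1..p. cmp m (n + p - 1) i f (if s + t = b + 1 then cmp n p j (G s) (H t) else 0))"
    using assms mem by (intro sum.cong refl cmp_sum_right if_zero_mem) auto
  also have "\<dots> = (\<Sum>s=1..n. \<Sum>t=1..p. if s + t = b + 1 then cmp m (n + p - 1) i f (cmp n p j (G s) (H t)) else 0)"
    using assms by (intro sum.cong refl cmp_if_zero_right) auto
  finally show ?thesis .
qed

lemma comp_comp_nested_left_component:
  assumes "1 \<le> m" "1 \<le> n" "1 \<le> p" "1 \<le> i" "i \<le> m" "1 \<le> I" "I \<le> m + n - 1"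
    and "F \<in> comp_carrier C m" "G \<in> comp_carrier C n" "H \<in> comp_carrier C p"
  shows "comp_comp cmp (m + n - 1) p I (comp_comp cmp m n i F G) H k =
    (\<Sum>r=1..m. \<Sum>s=1..n. \<Sum>t=1..p. if r + s + t = k + 2 then cmp (m + n - 1) p I (cmp m n i (F r) (G s)) (H t) else 0)"
proof -
  have "comp_comp cmp (m + n - 1) p I (comp_comp cmp m n i F G) H k =
      (\<Sum>a=1..m+n-1. \<Sum>t=1..p. if a + t = k + 1 then
        (\<Sum>r=1..m. \<Sum>s=1..n. if r + s = a + 1 then cmp (m + n - 1) p I (cmp m n i (F r) (G s)) (H t) else 0) else 0)"
    unfolding comp_comp_component[of _ "m + n - 1"] using assms
    by (intro sum.cong refl if_cong cmp_comp_comp_component_left) (auto intro: comp_carrier_component)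
  then show ?thesis
    by (simp only: sum_convolution_nested)
qed

lemma comp_comp_nested_right_component:
  assumes "1 \<le> m" "1 \<le> n" "1 \<le> p" "1 \<le> i" "i \<le> m" "1 \<le> j" "j \<le> n"
    and "F \<in> comp_carrier C m" "G \<in> comp_carrier C n" "H \<in> comp_carrier C p"
  shows "comp_comp cmp m (n + p - 1) i F (comp_comp cmp n p j G H) k =
    (\<Sum>r=1..m. \<Sum>s=1..n. \<Sum>t=1..p. if r + s + t = k + 2 then cmp m (n + p - 1) i (F r) (cmp n p j (G s) (H t)) else 0)"
proof -
  have "comp_comp cmp m (n + p - 1) i F (comp_comp cmp n p j G H) k =
      (\<Sum>r=1..m. \<Sum>b=1..n+p-1. if r + b = k + 1 then
        (\<Sum>s=1..n. \<Sum>t=1..p. if s + t = b + 1 then cmp m (n + p - 1) i (F r) (cmp n p j (G s) (H t)) else 0) else 0)"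
    unfolding comp_comp_component[of _ _ "n + p - 1"] using assms
    by (intro sum.cong refl if_cong cmp_comp_comp_component_right) (auto intro: comp_carrier_component)
  then show ?thesis
    by (simp only: sum_convolution_nested_right)
qed

lemma comp_comp_assoc:
  assumes "1 \<le> m" "1 \<le> n" "1 \<le> p" "1 \<le> i" "i \<le> m" "1 \<le> j" "j \<le> n"
    and "F \<in> comp_carrier C m" "G \<in> comp_carrier C n" "H \<in> comp_carrier C p"
  shows "comp_comp cmp (m + n - 1) p (i + j - 1) (comp_comp cmp m n i F G) H =
         comp_comp cmp m (n + p - 1) i F (comp_comp cmp n p j G H)"
proof
  fix k
  have "comp_comp cmp (m + n - 1) p (i + j - 1) (comp_comp cmp m n i F G) H k =
    (\<Sum>r=1..m. \<Sum>s=1..n. \<Sum>t=1..p. if r + s + t = k + 2 then cmp (m + n - 1) p (i + j - 1) (cmp m n i (F r) (G s)) (H t) else 0)"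
    using assms by (intro comp_comp_nested_left_component) auto
  also have "\<dots> = (\<Sum>r=1..m. \<Sum>s=1..n. \<Sum>t=1..p. if r + s + t = k + 2 then cmp m (n + p - 1) i (F r) (cmp n p j (G s) (H t)) else 0)"
    using assms by (intro sum.cong refl if_cong cmp_assoc) (auto intro: comp_carrier_component)
  also have "\<dots> = comp_comp cmp m (n + p - 1) i F (comp_comp cmp n p j G H) k"
    using assms by (intro comp_comp_nested_right_component[symmetric])
  finally show "comp_comp cmp (m + n - 1) p (i + j - 1) (comp_comp cmp m n i F G) H k =
    comp_comp cmp m (n + p - 1) i F (comp_comp cmp n p j G H) k" .
qed

lemma comp_comp_commute:
  assumes "1 \<le> m" "1 \<le> n" "1 \<le> p" "1 \<le> i" "i < j" "j \<le> m"
    and "F \<in> comp_carrier C m" "G \<in> comp_carrier C n" "H \<in> comp_carrier C p"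
  shows "comp_comp cmp (m + n - 1) p (j + n - 1) (comp_comp cmp m n i F G) H =
         comp_comp cmp (m + p - 1) n i (comp_comp cmp m p j F H) G"
proof
  fix k
  have "comp_comp cmp (m + n - 1) p (j + n - 1) (comp_comp cmp m n i F G) H k =
    (\<Sum>r=1..m. \<Sum>s=1..n. \<Sum>t=1..p. if r + s + t = k + 2 then cmp (m + n - 1) p (j + n - 1) (cmp m n i (F r) (G s)) (H t) else 0)"
    using assms by (intro comp_comp_nested_left_component) auto
  also have "\<dots> = (\<Sum>r=1..m. \<Sum>s=1..n. \<Sum>t=1..p. if r + t + s = k + 2 then cmp (m + p - 1) n i (cmp m p j (F r) (H t)) (G s) else 0)"
    using assms by (intro sum.cong refl if_cong cmp_commute) (auto intro: comp_carrier_component)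
  also have "\<dots> = (\<Sum>r=1..m. \<Sum>t=1..p. \<Sum>s=1..n. if r + t + s = k + 2 then cmp (m + p - 1) n i (cmp m p j (F r) (H t)) (G s) else 0)"
    by (intro sum.cong refl sum.swap)
  also have "\<dots> = comp_comp cmp (m + p - 1) n i (comp_comp cmp m p j F H) G k"
    using assms by (intro comp_comp_nested_left_component[symmetric]) auto
  finally show "comp_comp cmp (m + n - 1) p (j + n - 1) (comp_comp cmp m n i F G) H k =
    comp_comp cmp (m + p - 1) n i (comp_comp cmp m p j F H) G k" .
qed

lemma comp_comp_unit_right:
  assumes "1 \<le> m" "1 \<le> i" "i \<le> m" "F \<in> comp_carrier C m"
  shows "comp_comp cmp m 1 i F (comp_unit u) = F"
proof
  fix k
  have "comp_comp cmp m 1 i F (comp_unit u) k = (\<Sum>r=1..m. if r = k then F r else 0)"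
    unfolding comp_comp_component using assms
    by (intro sum.cong refl) (auto simp: comp_unit_def cmp_unit_right[unfolded One_nat_def] comp_carrier_component)
  also have "\<dots> = F k"
    using assms by (auto simp: comp_carrier_component_zero)
  finally show "comp_comp cmp m 1 i F (comp_unit u) k = F k" .
qed

lemma comp_comp_unit_left:
  assumes "1 \<le> m" "G \<in> comp_carrier C m"
  shows "comp_comp cmp 1 m 1 (comp_unit u) G = G"
proof
  fix k
  have "comp_comp cmp 1 m 1 (comp_unit u) G k = (\<Sum>s=1..m. if 1 + s = k + 1 then cmp 1 m 1 u (G s) else 0)"
    by (simp add: comp_comp_component comp_unit_def)
  also have "\<dots> = (\<Sum>s=1..m. if s = k then G s else 0)"
    using assms by (intro sum.cong refl) (auto simp: cmp_unit_left[unfolded One_nat_def] comp_carrier_component)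
  also have "\<dots> = G k"
    using assms by (auto simp: comp_carrier_component_zero)
  finally show "comp_comp cmp 1 m 1 (comp_unit u) G k = G k" .
qed

lemma comp_comp_add_left:
  assumes "1 \<le> m" "1 \<le> n" "1 \<le> i" "i \<le> m"
    and "F \<in> comp_carrier C m" "F' \<in> comp_carrier C m" "G \<in> comp_carrier C n"
  shows "comp_comp cmp m n i (F + F') G = comp_comp cmp m n i F G + comp_comp cmp m n i F' G"
  unfolding fun_eq_iff comp_comp_component plus_fun_def sum.distrib[symmetric] using assms
  by (auto intro!: sum.cong simp: cmp_add_left comp_carrier_component)

lemma comp_comp_add_right:
  assumes "1 \<le> m" "1 \<le> n" "1 \<le> i" "i \<le> m"
    and "F \<in> comp_carrier C m" "G \<in> comp_carrier C n" "G' \<in> comp_carrier C n"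
  shows "comp_comp cmp m n i F (G + G') = comp_comp cmp m n i F G + comp_comp cmp m n i F G'"
  unfolding fun_eq_iff comp_comp_component plus_fun_def sum.distrib[symmetric] using assms
  by (auto intro!: sum.cong simp: cmp_add_right comp_carrier_component)

lemma comp_comp_scale_left:
  assumes "1 \<le> m" "1 \<le> n" "1 \<le> i" "i \<le> m" "F \<in> comp_carrier C m" "G \<in> comp_carrier C n"
  shows "comp_comp cmp m n i (comp_scale scale c F) G = comp_scale scale c (comp_comp cmp m n i F G)"
  unfolding fun_eq_iff comp_comp_component comp_scale_def module.scale_sum_right[OF module_scale] using assms
  by (auto intro!: sum.cong simp: cmp_scale_left comp_carrier_component module.scale_zero_right[OF module_scale])

lemma comp_comp_scale_right:
  assumes "1 \<le> m" "1 \<le> n" "1 \<le> i" "i \<le> m" "F \<in> comp_carrier C m" "G \<in> comp_carrier C n"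
  shows "comp_comp cmp m n i F (comp_scale scale c G) = comp_scale scale c (comp_comp cmp m n i F G)"
  unfolding fun_eq_iff comp_comp_component comp_scale_def module.scale_sum_right[OF module_scale] using assms
  by (auto intro!: sum.cong simp: cmp_scale_right comp_carrier_component module.scale_zero_right[OF module_scale])

lemma comp_comp_mem:
  assumes "1 \<le> m" "1 \<le> n" "1 \<le> i" "i \<le> m" "F \<in> comp_carrier C m" "G \<in> comp_carrier C n"
  shows "comp_comp cmp m n i F G \<in> comp_carrier C (m + n - 1)"
  unfolding comp_carrier_def
proof (intro CollectI conjI ballI allI impI)
  fix k assume "k \<in> {1..m + n - 1}"
  show "comp_comp cmp m n i F G k \<in> C (m + n - 1)"
    unfolding comp_comp_component using assms by (intro sum_mem if_zero_mem cmp_components_mem) auto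
next
  fix k assume "k \<notin> {1..m + n - 1}"
  then show "comp_comp cmp m n i F G k = 0"
    by (auto simp: comp_comp_def)
qed

lemma module_comp_scale: "module (comp_scale scale)"
  using module_scale unfolding module_def comp_scale_def by (auto simp: fun_eq_iff)

lemma ns_operad_comp: "ns_operad (comp_scale scale) (comp_carrier C) (comp_comp cmp) (comp_unit u)"
  unfolding ns_operad_def
proof (intro conjI)
  show "\<forall>n\<ge>1. 0 \<in> comp_carrier C n \<and> (\<forall>F\<in>comp_carrier C n. \<forall>G\<in>comp_carrier C n. F + G \<in> comp_carrier C n) \<and>
      (\<forall>c. \<forall>F\<in>comp_carrier C n. comp_scale scale c F \<in> comp_carrier C n)"
    by (auto simp: comp_carrier_def comp_scale_def zero_mem add_mem scale_mem module.scale_zero_right[OF module_scale])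
  show "comp_unit u \<in> comp_carrier C 1"
    using unit_mem by (auto simp: comp_carrier_def comp_unit_def)
qed (blast intro: module_comp_scale comp_comp_mem comp_comp_add_left comp_comp_add_right
    comp_comp_scale_left comp_comp_scale_right comp_comp_assoc comp_comp_commute
    comp_comp_unit_right comp_comp_unit_left)+

end

lemma comp_comp_arity_two_component:
  "comp_comp cmp 2 2 i P Q k =
     (if k = 1 then cmp 2 2 i (P 1) (Q 1)
      else if k = 2 then cmp 2 2 i (P 1) (Q 2) + cmp 2 2 i (P 2) (Q 1)
      else if k = 3 then cmp 2 2 i (P 2) (Q 2) else 0)"
  by (simp add: comp_comp_component numeral_2_eq_2)

lemma is_multiplication_comp_iff_compatible:
  fixes C :: "nat \<Rightarrow> 'b::ab_group_add set"
  assumes "P \<in> comp_carrier C 2"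
  shows "is_multiplication (comp_carrier C) (comp_comp cmp) P \<longleftrightarrow> compatible_multiplication C cmp (P 1) (P 2)"
proof -
  have "comp_comp cmp 2 2 1 P P = comp_comp cmp 2 2 2 P P \<longleftrightarrow>
      cmp 2 2 1 (P 1) (P 1) = cmp 2 2 2 (P 1) (P 1) \<and>
      cmp 2 2 1 (P 1) (P 2) + cmp 2 2 1 (P 2) (P 1) = cmp 2 2 2 (P 1) (P 2) + cmp 2 2 2 (P 2) (P 1) \<and>
      cmp 2 2 1 (P 2) (P 2) = cmp 2 2 2 (P 2) (P 2)" (is "_ \<longleftrightarrow> ?three")
  proof
    assume "comp_comp cmp 2 2 1 P P = comp_comp cmp 2 2 2 P P"
    from fun_cong[OF this, of 1] fun_cong[OF this, of 2] fun_cong[OF this, of 3]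
    show ?three by (simp add: comp_comp_arity_two_component)
  qed (simp add: fun_eq_iff comp_comp_arity_two_component)
  moreover have "P 1 \<in> C 2" "P 2 \<in> C 2"
    using assms by (auto simp: comp_carrier_def)
  ultimately show ?thesis
    using assms by (auto simp: is_multiplication_def compatible_multiplication_def)
qed

theorem theorem3p3:
  fixes scale :: "'a::{comm_ring_1, ring_char_0} \<Rightarrow> 'b::ab_group_add \<Rightarrow> 'b"
    and C :: "nat \<Rightarrow> 'b set"
    and cmp :: "nat \<Rightarrow> nat \<Rightarrow> nat \<Rightarrow> 'b \<Rightarrow> 'b \<Rightarrow> 'b"
    and u :: 'b
  assumes "ns_operad scale C cmp u"
  shows "ns_operad (comp_scale scale) (comp_carrier C) (comp_comp cmp) (comp_unit u) \<and>
         (\<forall>p \<in> comp_carrier C 2.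
            is_multiplication (comp_carrier C) (comp_comp cmp) p
              \<longleftrightarrow> compatible_multiplication C cmp (p 1) (p 2))"
  using ns_operad_comp[OF assms] is_multiplication_comp_iff_compatible by blast

end
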